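(* Let $\theta>0$, $\lambda>0$, $\mu>0$, $e\ge 0$. For $\alpha\ge0$, $d\ge0$ let $$\pi(\alpha,d)=(\theta+\mu)\alpha-\frac{\alpha^2}{2}-\frac{\alpha}{\alpha+d}\lambda\alpha\theta-d,\qquad W(\alpha,d)=\pi(\alpha,d)-e\,\frac{\alpha}{\alpha+d}\,\lambda\alpha\theta .$$ Then the deployment component of the joint maximizer of $W$ over $(\alpha,d)$ (first-best deployment) is $$\alpha^{**}_{FB}(\theta)=\max\!\left\{0,\;\begin{cases}\mu+\theta\big(1-(1+e)\lambda\big), & (1+e)\lambda\theta\le 1,\\ \theta+\mu+1-2\sqrt{(1+e)\lambda\theta}, & (1+e)\lambda\theta>1.\end{cases}\right\}$$
   Context: $\alpha$ is AI deployment, $d$ security investment, $\theta$ capability, $\lambda$ breach-loss magnitude, $\mu$ organizational readiness, $e$ the breach externality parameter (total social breach damage is $(1+e)p\cdot L$ with $p=\alpha/(\alpha+d)$ and $L=\lambda\alpha\theta$). Convention $p(0,d)=0$. *)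

theory Defs
  imports Complex_Main
begin

definition breach_prob :: "real \<Rightarrow> real \<Rightarrow> real" where
  "breach_prob \<alpha> d = (if \<alpha> = 0 then 0 else \<alpha> / (\<alpha> + d))"

definition profit :: "real \<Rightarrow> real \<Rightarrow> real \<Rightarrow> real \<Rightarrow> real \<Rightarrow> real" where
  "profit \<theta> lam \<mu> \<alpha> d =
     (\<theta> + \<mu>) * \<alpha> - \<alpha>^2 / 2 - breach_prob \<alpha> d * (lam * \<alpha> * \<theta>) - d"

definition welfare :: "real \<Rightarrow> real \<Rightarrow> real \<Rightarrow> real \<Rightarrow> real \<Rightarrow> real \<Rightarrow> real" where
  "welfare \<theta> lam \<mu> e \<alpha> d =
     profit \<theta> lam \<mu> \<alpha> d - e * breach_prob \<alpha> d * (lam * \<alpha> * \<theta>)"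

definition alpha_FB :: "real \<Rightarrow> real \<Rightarrow> real \<Rightarrow> real \<Rightarrow> real" where
  "alpha_FB \<theta> lam \<mu> e = max 0
     (if (1 + e) * lam * \<theta> \<le> 1 then \<mu> + \<theta> * (1 - (1 + e) * lam)
      else \<theta> + \<mu> + 1 - 2 * sqrt ((1 + e) * lam * \<theta>))"

end

theory Submission
  imports Defs
begin

text \<open>With \<open>k = (1 + e) \<lambda> \<theta>\<close>, the welfare is \<open>(\<theta> + \<mu>) \<alpha> - \<alpha>\<^sup>2/2 - (k \<alpha>\<^sup>2/(\<alpha> + d) + d)\<close>.
  For fixed \<open>\<alpha>\<close> the bracket is minimised over \<open>d \<ge> 0\<close> at \<open>d = 0\<close> when \<open>k \<le> 1\<close> and at
  \<open>d = \<alpha>(\<surd>k - 1)\<close> otherwise (AM-GM), with minimum \<open>c(k) \<alpha>\<close>, \<open>c(k) = k\<close> resp. \<open>2\<surd>k - 1\<close>.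
  What remains is the concave quadratic \<open>(\<theta> + \<mu> - c(k)) \<alpha> - \<alpha>\<^sup>2/2\<close>, whose unique maximiser
  on \<open>\<alpha> \<ge> 0\<close> is \<open>max 0 (\<theta> + \<mu> - c(k))\<close>.\<close>

definition security_cost_rate :: "real \<Rightarrow> real" where
  "security_cost_rate k = (if k \<le> 1 then k else 2 * sqrt k - 1)"

definition optimal_security :: "real \<Rightarrow> real \<Rightarrow> real" where
  "optimal_security k a = (if k \<le> 1 then 0 else a * (sqrt k - 1))"

lemma welfare_eq:
  "welfare \<theta> lam \<mu> e a d = (\<theta> + \<mu>) * a - a\<^sup>2 / 2 - (1 + e) * lam * \<theta> * (a\<^sup>2 / (a + d)) - d"
  unfolding welfare_def profit_def breach_prob_def
  by (simp add: power2_eq_square field_simps add_divide_distrib)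

lemma security_cost_rate_le:
  fixes k a d :: real
  assumes "0 \<le> a" "0 \<le> d"
  shows "security_cost_rate k * a \<le> k * (a\<^sup>2 / (a + d)) + d"
proof (cases "a = 0")
  case True
  then show ?thesis using assms by simp
next
  case False
  then have apd: "0 < a + d" using assms by simp
  show ?thesis
  proof (cases "k \<le> 1")
    case True
    have "k * a \<le> a" using mult_right_mono[OF True \<open>0 \<le> a\<close>] by simp
    then have "0 \<le> d * (a + d - k * a)" using assms by simp
    then have "k * a * (a + d) \<le> k * a\<^sup>2 + d * (a + d)"
      by (simp add: algebra_simps power2_eq_square)
    then show ?thesis
      using True apd by (simp add: security_cost_rate_def field_simps)
  next
    case False
    define s where "s = sqrt k"
    have k: "k = s\<^sup>2" and "0 < s" using False by (simp_all add: s_def)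
    have "2 * s * a * (a + d) \<le> s\<^sup>2 * a\<^sup>2 + (a + d)\<^sup>2"
      using sum_squares_bound[of "s * a" "a + d"] by (simp add: algebra_simps power2_eq_square)
    then show ?thesis
      using False apd \<open>0 < s\<close>
      by (simp add: security_cost_rate_def k s_def[symmetric] field_simps power2_eq_square)
  qed
qed

lemma optimal_security_nonneg: "0 \<le> a \<Longrightarrow> 0 \<le> optimal_security k a"
  by (simp add: optimal_security_def)

lemma security_cost_optimal_security:
  fixes k a :: real
  assumes "0 \<le> a"
  shows "k * (a\<^sup>2 / (a + optimal_security k a)) + optimal_security k a = security_cost_rate k * a"
proof (cases "k \<le> 1")
  case True
  then show ?thesis
    by (simp add: optimal_security_def security_cost_rate_def power2_eq_square)
next
  case False
  define s where "s = sqrt k"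
  have "k = s\<^sup>2" "0 < s" using False by (simp_all add: s_def)
  moreover have "a + a * (s - 1) = s * a" by (simp add: algebra_simps)
  ultimately show ?thesis
    using False by (simp add: optimal_security_def security_cost_rate_def s_def[symmetric]
        field_simps power2_eq_square)
qed

lemma welfare_le:
  assumes "0 \<le> a" "0 \<le> d"
  shows "welfare \<theta> lam \<mu> e a d
    \<le> (\<theta> + \<mu> - security_cost_rate ((1 + e) * lam * \<theta>)) * a - a\<^sup>2 / 2"
  using security_cost_rate_le[OF assms, of "(1 + e) * lam * \<theta>"]
  by (simp add: welfare_eq algebra_simps)

lemma welfare_optimal_security:
  assumes "0 \<le> a"
  shows "welfare \<theta> lam \<mu> e a (optimal_security ((1 + e) * lam * \<theta>) a)
    = (\<theta> + \<mu> - security_cost_rate ((1 + e) * lam * \<theta>)) * a - a\<^sup>2 / 2"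
  using security_cost_optimal_security[OF assms, of "(1 + e) * lam * \<theta>"]
  by (simp add: welfare_eq algebra_simps)

lemma concave_quadratic_gap:
  fixes m a :: real
  assumes "0 \<le> a"
  shows "(a - max 0 m)\<^sup>2 / 2 \<le> (m * max 0 m - (max 0 m)\<^sup>2 / 2) - (m * a - a\<^sup>2 / 2)"
proof (cases "0 \<le> m")
  case True
  have "(m * m - m\<^sup>2 / 2) - (m * a - a\<^sup>2 / 2) = (a - m)\<^sup>2 / 2"
    by (simp add: power2_eq_square field_simps)
  then show ?thesis using True by simp
next
  case False
  then have "m * a \<le> 0" using assms by (simp add: mult_nonpos_nonneg)
  then show ?thesis using False by (simp add: algebra_simps)
qed

lemma alpha_FB_eq:
  "alpha_FB \<theta> lam \<mu> e = max 0 (\<theta> + \<mu> - security_cost_rate ((1 + e) * lam * \<theta>))"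
  unfolding alpha_FB_def security_cost_rate_def by (simp add: algebra_simps)

theorem proposition6:
  fixes \<theta> lam \<mu> e :: real
  assumes "\<theta> > 0" and "lam > 0" and "\<mu> > 0" and "e \<ge> 0"
  shows "(\<exists>d\<ge>0. \<forall>a'\<ge>0. \<forall>d'\<ge>0.
            welfare \<theta> lam \<mu> e a' d' \<le> welfare \<theta> lam \<mu> e (alpha_FB \<theta> lam \<mu> e) d)
       \<and> (\<forall>a\<ge>0. \<forall>d\<ge>0.
            (\<forall>a'\<ge>0. \<forall>d'\<ge>0. welfare \<theta> lam \<mu> e a' d' \<le> welfare \<theta> lam \<mu> e a d)
            \<longrightarrow> a = alpha_FB \<theta> lam \<mu> e)"
proof -
  define k where "k = (1 + e) * lam * \<theta>"
  define m where "m = \<theta> + \<mu> - security_cost_rate k"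
  define V where "V a = m * a - a\<^sup>2 / 2" for a :: real
  define A where "A = alpha_FB \<theta> lam \<mu> e"
  define D where "D = optimal_security k A"
  have A: "A = max 0 m" "0 \<le> A" by (simp_all add: A_def alpha_FB_eq m_def k_def)
  have "0 \<le> D" using A by (simp add: D_def optimal_security_nonneg)
  have upper: "welfare \<theta> lam \<mu> e a d \<le> V a" if "0 \<le> a" "0 \<le> d" for a d
    using welfare_le[OF that] by (simp add: V_def m_def k_def)
  have attained: "welfare \<theta> lam \<mu> e A D = V A"
    using welfare_optimal_security[OF \<open>0 \<le> A\<close>] by (simp add: V_def m_def k_def D_def)
  have gap: "(a - A)\<^sup>2 / 2 \<le> V A - V a" if "0 \<le> a" for a
    using concave_quadratic_gap[OF that, of m] by (simp add: V_def A)
  have "welfare \<theta> lam \<mu> e a' d' \<le> welfare \<theta> lam \<mu> e A D" if "0 \<le> a'" "0 \<le> d'" for a' d'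
    using upper[OF that] gap[OF \<open>0 \<le> a'\<close>] attained zero_le_power2[of "a' - A"] by linarith
  moreover have "a = A" if "0 \<le> a" "0 \<le> d"
    and "\<forall>a'\<ge>0. \<forall>d'\<ge>0. welfare \<theta> lam \<mu> e a' d' \<le> welfare \<theta> lam \<mu> e a d" for a d
  proof -
    have "V A \<le> welfare \<theta> lam \<mu> e a d" using that(3) A(2) \<open>0 \<le> D\<close> attained by metis
    then have "V A \<le> V a" using upper[OF that(1,2)] by linarith
    then have "(a - A)\<^sup>2 \<le> 0" using gap[OF \<open>0 \<le> a\<close>] by linarith
    then show ?thesis by simp
  qed
  ultimately show ?thesis using \<open>0 \<le> D\<close> unfolding A_def by blast
qed

end
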